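(* $\mathbb{Y}_{\tt k}\subseteq\Theta_{\tt k}$; that is, for every $w\in S_n^{\tt k}$, the inversion set $\{(a,b)\in\Omega_{GL_n}: w(a)>w(b)\}$ is a ${\tt k}$-diagram.
   Context: Fix $n$ and ${\tt k}=\{k_1<\dots<k_{d-1}\}$ with $0<k_1<\dots<k_{d-1}<n$; set $k_0=0$, $k_d=n$, $I_i=[k_{i-1}+1,k_i]$. $S_n^{\tt k}$ is the set of $w\in S_n$ whose descents lie in ${\tt k}$, and $\mathbb{Y}_{\tt k}$ is the set of their inversion sets. $\Omega_{GL_n}=\{(a,b):1\le a<b\le n\}$ ordered by $(a',b')\preceq(a,b)$ iff $a\le a'$ and $b'\le b$; regions $\Lambda^{ij}_{\tt k}=I_i\times I_j$ for $i<j$. $S\subseteq\Omega_{GL_n}$ is a ${\tt k}$-diagram if $S\cap\Lambda^{ij}_{\tt k}$ is a lower order ideal of $\Lambda^{ij}_{\tt k}$ for every $i<j$, and for each $(a,b)$, with hook $H(a,b)=\{(a,l):a<l<b\}\cup\{(j,b):a<j<b\}$: if more than half of $H(a,b)$ lies in $S$ then $(a,b)\in S$, and if more than half lies outside $S$ then $(a,b)\notin S$. $\Theta_{\tt k}$ is the set of ${\tt k}$-diagrams. *)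

theory Defs
  imports "HOL-Combinatorics.Permutations"
begin

text \<open>The composition data k = {k_1 < ... < k_{d-1}} is a finite set K of naturals
with 0 < k_i < n. We set k_0 = 0, k_d = n.\<close>

definition kseq :: "nat \<Rightarrow> nat set \<Rightarrow> nat \<Rightarrow> nat" where
  "kseq n K i = (0 # sorted_list_of_set K @ [n]) ! i"

definition kd :: "nat set \<Rightarrow> nat" where
  "kd K = card K + 1"

definition kblock :: "nat \<Rightarrow> nat set \<Rightarrow> nat \<Rightarrow> nat set" where
  "kblock n K i = {kseq n K (i - 1) + 1 .. kseq n K i}"

definition Omega :: "nat \<Rightarrow> (nat \<times> nat) set" where
  "Omega n = {(a, b). 1 \<le> a \<and> a < b \<and> b \<le> n}"

definition omega_le :: "nat \<times> nat \<Rightarrow> nat \<times> nat \<Rightarrow> bool" where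
  "omega_le p q \<longleftrightarrow> fst q \<le> fst p \<and> snd p \<le> snd q"

definition Lambda :: "nat \<Rightarrow> nat set \<Rightarrow> nat \<Rightarrow> nat \<Rightarrow> (nat \<times> nat) set" where
  "Lambda n K i j = kblock n K i \<times> kblock n K j"

definition lower_ideal :: "(nat \<times> nat) set \<Rightarrow> (nat \<times> nat) set \<Rightarrow> bool" where
  "lower_ideal T P \<longleftrightarrow> T \<subseteq> P \<and> (\<forall>x\<in>T. \<forall>y\<in>P. omega_le y x \<longrightarrow> y \<in> T)"

definition hook :: "nat \<Rightarrow> nat \<Rightarrow> (nat \<times> nat) set" where
  "hook a b = {(a, l) | l. a < l \<and> l < b} \<union> {(j, b) | j. a < j \<and> j < b}"

definition is_k_diagram :: "nat \<Rightarrow> nat set \<Rightarrow> (nat \<times> nat) set \<Rightarrow> bool" where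
  "is_k_diagram n K S \<longleftrightarrow>
     S \<subseteq> Omega n \<and>
     (\<forall>i j. 1 \<le> i \<and> i < j \<and> j \<le> kd K \<longrightarrow> lower_ideal (S \<inter> Lambda n K i j) (Lambda n K i j)) \<and>
     (\<forall>(a, b) \<in> Omega n.
        (2 * card (hook a b \<inter> S) > card (hook a b) \<longrightarrow> (a, b) \<in> S) \<and>
        (2 * card (hook a b - S) > card (hook a b) \<longrightarrow> (a, b) \<notin> S))"

definition Snk :: "nat \<Rightarrow> nat set \<Rightarrow> (nat \<Rightarrow> nat) set" where
  "Snk n K = {w. w permutes {1..n} \<and> (\<forall>i. 1 \<le> i \<and> i < n \<and> w (Suc i) < w i \<longrightarrow> i \<in> K)}"

definition inv_set :: "nat \<Rightarrow> (nat \<Rightarrow> nat) \<Rightarrow> (nat \<times> nat) set" where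
  "inv_set n w = {(a, b) \<in> Omega n. w b < w a}"

end

theory Submission
  imports Defs
begin

text \<open>Inversion sets are transitive and so are their complements: if \<open>(a,l)\<close> and \<open>(l,b)\<close> are
  both inversions (both non-inversions) of \<open>w\<close>, then so is \<open>(a,b)\<close>. Hence whenever \<open>(a,b)\<close> is
  not an inversion, each \<open>l\<close> with \<open>a < l < b\<close> contributes at most one of the two hook cells
  \<open>(a,l)\<close>, \<open>(l,b)\<close> to the inversion set, which is at most half of the hook; dually for the
  complement. Within a block \<open>I\<^sub>i\<close> there are no descents, so \<open>w\<close> is increasing on each block,
  and moving a cell of \<open>I\<^sub>i \<times> I\<^sub>j\<close> down in the order \<open>\<preceq>\<close> can only enlarge \<open>w a - w b\<close>.\<close>

lemma hook_eq: "hook a b = Pair a ` {a<..<b} \<union> (\<lambda>j. (j, b)) ` {a<..<b}"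
  unfolding hook_def by auto

lemma card_hook: "card (hook a b) = 2 * card {a<..<b}"
proof -
  have "card (hook a b) = card (Pair a ` {a<..<b}) + card ((\<lambda>j. (j, b)) ` {a<..<b})"
    unfolding hook_eq by (rule card_Un_disjoint) auto
  also have "\<dots> = 2 * card {a<..<b}"
    by (simp add: card_image inj_on_def)
  finally show ?thesis .
qed

lemma card_hook_Int_le_half:
  assumes no_path: "\<And>l. a < l \<Longrightarrow> l < b \<Longrightarrow> (a, l) \<in> T \<Longrightarrow> (l, b) \<notin> T"
  shows "2 * card (hook a b \<inter> T) \<le> card (hook a b)"
proof -
  define L1 where "L1 = {l \<in> {a<..<b}. (a, l) \<in> T}"
  define L2 where "L2 = {l \<in> {a<..<b}. (l, b) \<in> T}"
  have split: "hook a b \<inter> T = Pair a ` L1 \<union> (\<lambda>j. (j, b)) ` L2"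
    unfolding hook_eq L1_def L2_def by auto
  have "card (hook a b \<inter> T) = card (Pair a ` L1) + card ((\<lambda>j. (j, b)) ` L2)"
    unfolding split by (rule card_Un_disjoint) (auto simp: L1_def L2_def)
  also have "\<dots> = card (L1 \<union> L2)"
    using no_path by (simp add: card_image inj_on_def card_Un_disjoint L1_def L2_def disjoint_iff)
  also have "\<dots> \<le> card {a<..<b}"
    by (rule card_mono) (auto simp: L1_def L2_def)
  finally show ?thesis
    by (simp add: card_hook)
qed

lemma inv_set_trans:
  "(a, l) \<in> inv_set n w \<Longrightarrow> (l, b) \<in> inv_set n w \<Longrightarrow> (a, b) \<in> inv_set n w"
  unfolding inv_set_def Omega_def by auto

lemma non_inv_set_trans:
  "(a, l) \<in> Omega n \<Longrightarrow> (l, b) \<in> Omega n \<Longrightarrow> (a, l) \<notin> inv_set n w \<Longrightarrow> (l, b) \<notin> inv_set n w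
    \<Longrightarrow> (a, b) \<notin> inv_set n w"
  unfolding inv_set_def Omega_def by auto

lemma hook_subset_Omega: "(a, b) \<in> Omega n \<Longrightarrow> hook a b \<subseteq> Omega n"
  unfolding hook_def Omega_def by auto

lemma inv_set_hook_majority:
  assumes "(a, b) \<in> Omega n" and "card (hook a b) < 2 * card (hook a b \<inter> inv_set n w)"
  shows "(a, b) \<in> inv_set n w"
  using assms card_hook_Int_le_half[of a b "inv_set n w"] inv_set_trans not_le by blast

lemma non_inv_set_hook_majority:
  assumes ab: "(a, b) \<in> Omega n" and "card (hook a b) < 2 * card (hook a b - inv_set n w)"
  shows "(a, b) \<notin> inv_set n w"
proof
  assume inv: "(a, b) \<in> inv_set n w"
  have "2 * card (hook a b \<inter> (Omega n - inv_set n w)) \<le> card (hook a b)"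
  proof (rule card_hook_Int_le_half)
    fix l assume "a < l" "l < b" "(a, l) \<in> Omega n - inv_set n w"
    then show "(l, b) \<notin> Omega n - inv_set n w"
      using ab inv non_inv_set_trans by blast
  qed
  moreover have "hook a b \<inter> (Omega n - inv_set n w) = hook a b - inv_set n w"
    using hook_subset_Omega[OF ab] by blast
  ultimately show False
    using assms(2) by simp
qed

lemma sorted_nth_gap_notin_set:
  assumes "sorted xs" "Suc i < length xs" "xs ! i < m" "m < xs ! Suc i"
  shows "m \<notin> set xs"
proof
  assume "m \<in> set xs"
  then obtain p where p: "p < length xs" "xs ! p = m"
    by (meson in_set_conv_nth)
  show False
  proof (cases "p \<le> i")
    case True
    then show False using assms p sorted_nth_mono[of xs p i] by simp
  next
    case False
    then show False using assms p sorted_nth_mono[of xs "Suc i" p] by simp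
  qed
qed

lemma mono_on_atLeastAtMost_Suc:
  fixes w :: "nat \<Rightarrow> 'a::order"
  assumes "\<And>m. lo \<le> m \<Longrightarrow> m < hi \<Longrightarrow> w m \<le> w (Suc m)"
  shows "mono_on {lo..hi} w"
proof (rule mono_onI)
  fix x y assume "x \<in> {lo..hi}" "y \<in> {lo..hi}" "x \<le> y"
  from \<open>x \<le> y\<close> \<open>y \<in> {lo..hi}\<close> show "w x \<le> w y"
  proof (induction y rule: dec_induct)
    case (step m)
    then show ?case
      using \<open>x \<in> {lo..hi}\<close> assms[of m] by (auto intro: order_trans)
  qed simp
qed

context
  fixes n :: nat and K :: "nat set"
  assumes K: "K \<subseteq> {0<..<n}"
begin

private lemma finite_K: "finite K"
  using K finite_subset by blast

lemma sorted_kseq_list: "sorted (0 # sorted_list_of_set K @ [n])"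
  using K finite_K by (auto simp: sorted_append)

lemma length_kseq_list: "length (0 # sorted_list_of_set K @ [n]) = Suc (kd K)"
  using finite_K by (simp add: kd_def)

lemma kseq_mono: "i \<le> j \<Longrightarrow> j \<le> kd K \<Longrightarrow> kseq n K i \<le> kseq n K j"
  unfolding kseq_def using sorted_kseq_list length_kseq_list by (simp add: sorted_nth_mono)

lemma kseq_le: "i \<le> kd K \<Longrightarrow> kseq n K i \<le> n"
  using nth_mem[of i "0 # sorted_list_of_set K @ [n]"] length_kseq_list K finite_K
  by (auto simp: kseq_def)

lemma kseq_gap_notin_K:
  assumes "1 \<le> i" "i \<le> kd K" "kseq n K (i - 1) < m" "m < kseq n K i"
  shows "m \<notin> K"
  using sorted_nth_gap_notin_set[OF sorted_kseq_list, of "i - 1" m] assms length_kseq_list finite_K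
  by (simp add: kseq_def)

lemma mono_on_kblock:
  assumes "w \<in> Snk n K" "1 \<le> i" "i \<le> kd K"
  shows "mono_on (kblock n K i) w"
  unfolding kblock_def
proof (rule mono_on_atLeastAtMost_Suc)
  fix m assume m: "kseq n K (i - 1) + 1 \<le> m" "m < kseq n K i"
  then have "m \<notin> K" "m < n"
    using kseq_gap_notin_K kseq_le assms by fastforce+
  then show "w m \<le> w (Suc m)"
    using assms(1) m unfolding Snk_def by (auto simp: not_less[symmetric])
qed

lemma kblock_less:
  assumes "i < j" "j \<le> kd K" "a \<in> kblock n K i" "b \<in> kblock n K j"
  shows "a < b"
proof -
  have "kseq n K i \<le> kseq n K (j - 1)"
    using assms(1,2) by (intro kseq_mono) auto
  then show ?thesis
    using assms(3,4) unfolding kblock_def by auto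
qed

lemma lower_ideal_inv_set_Lambda:
  assumes w: "w \<in> Snk n K" and ij: "1 \<le> i" "i < j" "j \<le> kd K"
  shows "lower_ideal (inv_set n w \<inter> Lambda n K i j) (Lambda n K i j)"
  unfolding lower_ideal_def
proof (intro conjI ballI impI)
  fix x y assume x: "x \<in> inv_set n w \<inter> Lambda n K i j" and y: "y \<in> Lambda n K i j"
    and "omega_le y x"
  obtain a b a' b' where xy: "x = (a, b)" "y = (a', b')" and "a \<le> a'" "b' \<le> b"
    using \<open>omega_le y x\<close> unfolding omega_le_def by (cases x, cases y) auto
  have blocks: "a \<in> kblock n K i" "b \<in> kblock n K j" "a' \<in> kblock n K i" "b' \<in> kblock n K j"
    using x y xy unfolding Lambda_def by auto
  have "mono_on (kblock n K i) w" "mono_on (kblock n K j) w"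
    using mono_on_kblock[OF w] ij by auto
  then have "w a \<le> w a'" "w b' \<le> w b"
    using blocks \<open>a \<le> a'\<close> \<open>b' \<le> b\<close> by (auto dest: mono_onD)
  moreover have "a' < b'"
    using kblock_less blocks ij by blast
  ultimately show "y \<in> inv_set n w \<inter> Lambda n K i j"
    using x y xy \<open>a \<le> a'\<close> \<open>b' \<le> b\<close> unfolding inv_set_def Omega_def by auto
qed auto

end

theorem claim2p4:
  fixes n :: nat and K :: "nat set" and w :: "nat \<Rightarrow> nat"
  assumes "K \<subseteq> {0<..<n}"
    and "w \<in> Snk n K"
  shows "is_k_diagram n K (inv_set n w)"
  unfolding is_k_diagram_def
  using lower_ideal_inv_set_Lambda[OF assms] inv_set_hook_majority non_inv_set_hook_majority
  by (auto simp: inv_set_def)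

end
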